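(* Let $s \geq 3$, $b \geq 1$ and $a \geq 128$ be integers and let $q$ be a prime power with $q \geq a\log q$. Let $\mathcal{H}$ be a partial linear space with point set $P$ and line set $L$ satisfying properties (i)–(v) below. Then for every $X \subseteq L$, $$\sum_{p \in P_X} |X_p| > \tfrac{1}{2}(a\log q)\,|X| - 2abq^2\log q.$$ Properties: (i) $|L| = q^2(q^2-q+1)$; (ii) $a(q^2\log q)/2 \leq |P| \leq 2aq^2\log q$; (iii) each line has at least $(a\log q)/2$ points; (iv) for any pair of lines, the number of $(s+1)$-fans containing that pair is at most $(2a\log q)^s$; (v) every set of $s+1$ pairwise intersecting lines either passes through a common point or is an $(s+1)$-fan.
   Context: A partial linear space consists of a set of points and a set of lines (sets of points) such that any two distinct lines share at most one point. For $t \geq 3$, a $t$-fan is a set of $t$ pairwise intersecting lines such that $t-1$ of them pass through a common point and the remaining one does not pass through that point. For $X \subseteq L$ and $p \in P$, $X_p$ denotes the set of lines in $X$ containing $p$, and $P_X = \{p \in P : |X_p| \geq b\}$. $\log$ is the natural logarithm. (Such $\mathcal{H}$ exists for these parameters.) *)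

theory Defs
  imports Complex_Main "HOL-Number_Theory.Prime_Powers"
begin

definition partial_linear_space :: "'p set \<Rightarrow> 'p set set \<Rightarrow> bool" where
  "partial_linear_space P L \<longleftrightarrow>
     (\<forall>l\<in>L. l \<subseteq> P) \<and>
     (\<forall>l\<in>L. \<forall>m\<in>L. l \<noteq> m \<longrightarrow> card (l \<inter> m) \<le> 1)"

definition pairwise_intersecting :: "'p set set \<Rightarrow> bool" where
  "pairwise_intersecting F \<longleftrightarrow> (\<forall>l\<in>F. \<forall>m\<in>F. l \<inter> m \<noteq> {})"

definition is_fan :: "'p set set \<Rightarrow> nat \<Rightarrow> 'p set set \<Rightarrow> bool" where
  "is_fan L t F \<longleftrightarrow> F \<subseteq> L \<and> card F = t \<and> pairwise_intersecting F \<and>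
     (\<exists>x l0. l0 \<in> F \<and> x \<notin> l0 \<and> (\<forall>l\<in>F - {l0}. x \<in> l))"

definition lines_through :: "'p set set \<Rightarrow> 'p \<Rightarrow> 'p set set" where
  "lines_through X p = {l\<in>X. p \<in> l}"

definition rich_points :: "'p set \<Rightarrow> nat \<Rightarrow> 'p set set \<Rightarrow> 'p set" where
  "rich_points P b X = {p\<in>P. card (lines_through X p) \<ge> b}"

end

theory Submission
  imports Defs
begin

text \<open>Only the incidence count matters: the lines of \<open>X\<close> carry at least
  \<open>|X| a log q / 2\<close> incidences, while every point outside \<open>P\<^sub>X\<close> lies on fewer
  than \<open>b\<close> lines of \<open>X\<close>, so these points absorb fewer than
  \<open>b |P| \<le> 2 a b q\<^sup>2 log q\<close> incidences.\<close>

lemma sum_card_lines_through: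
  assumes "finite P" and "finite X" and "\<forall>l\<in>X. l \<subseteq> P"
  shows "(\<Sum>p\<in>P. card (lines_through X p)) = (\<Sum>l\<in>X. card l)"
proof -
  have "(\<Sum>p\<in>P. card (lines_through X p)) = (\<Sum>p\<in>P. \<Sum>l\<in>X. if p \<in> l then 1 else (0::nat))"
    unfolding lines_through_def using assms by (simp add: sum.If_cases Int_def)
  also have "\<dots> = (\<Sum>l\<in>X. \<Sum>p\<in>P. if p \<in> l then 1 else (0::nat))"
    by (rule sum.swap)
  also have "\<dots> = (\<Sum>l\<in>X. card l)"
  proof (rule sum.cong[OF refl])
    fix l assume "l \<in> X"
    hence "P \<inter> l = l" using assms by auto
    thus "(\<Sum>p\<in>P. if p \<in> l then 1 else (0::nat)) = card l"
      using assms by (simp add: sum.If_cases)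
  qed
  finally show ?thesis .
qed

lemma sum_card_lines_through_not_rich_le:
  assumes "finite P"
  shows "(\<Sum>p\<in>P - rich_points P b X. card (lines_through X p)) \<le> (b - 1) * card P"
proof -
  have "(\<Sum>p\<in>P - rich_points P b X. card (lines_through X p))
      \<le> (\<Sum>p\<in>P - rich_points P b X. b - 1)"
    by (rule sum_mono) (auto simp: rich_points_def)
  also have "\<dots> = (b - 1) * card (P - rich_points P b X)"
    by simp
  also have "\<dots> \<le> (b - 1) * card P"
    using assms by (intro mult_left_mono card_mono) auto
  finally show ?thesis .
qed

lemma sum_card_le_rich_incidences:
  assumes "finite P" and "finite X" and "\<forall>l\<in>X. l \<subseteq> P"
  shows "(\<Sum>l\<in>X. real (card l))
    \<le> (\<Sum>p\<in>rich_points P b X. real (card (lines_through X p))) + real (b - 1) * real (card P)"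
proof -
  have "rich_points P b X \<subseteq> P"
    by (auto simp: rich_points_def)
  hence "(\<Sum>p\<in>P. card (lines_through X p))
      = (\<Sum>p\<in>rich_points P b X. card (lines_through X p))
        + (\<Sum>p\<in>P - rich_points P b X. card (lines_through X p))"
    using assms(1) by (metis sum.subset_diff add.commute)
  hence "(\<Sum>l\<in>X. card l)
      \<le> (\<Sum>p\<in>rich_points P b X. card (lines_through X p)) + (b - 1) * card P"
    using sum_card_lines_through[OF assms]
      sum_card_lines_through_not_rich_le[OF assms(1), where b=b and X=X]
    by linarith
  hence "real (\<Sum>l\<in>X. card l)
      \<le> real ((\<Sum>p\<in>rich_points P b X. card (lines_through X p)) + (b - 1) * card P)"
    by (simp only: of_nat_le_iff)
  thus ?thesis
    by (simp only: of_nat_add of_nat_mult of_nat_sum)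
qed

theorem lemma4p2:
  fixes P :: "'p set" and L :: "'p set set" and s b a q :: nat
  assumes s: "s \<ge> 3" and b: "b \<ge> 1" and a: "a \<ge> 128"
    and q: "primepow q" and qlog: "real q \<ge> real a * ln (real q)"
    and pls: "partial_linear_space P L"
    and i: "card L = q^2 * (q^2 - q + 1)"
    and ii: "real a * (real q ^ 2 * ln (real q)) / 2 \<le> real (card P)"
            "real (card P) \<le> 2 * real a * real q ^ 2 * ln (real q)"
    and iii: "\<forall>l\<in>L. real (card l) \<ge> real a * ln (real q) / 2"
    and iv: "\<forall>l1\<in>L. \<forall>l2\<in>L. l1 \<noteq> l2 \<longrightarrow>
               real (card {F. is_fan L (s+1) F \<and> l1 \<in> F \<and> l2 \<in> F})
                 \<le> (2 * real a * ln (real q)) ^ s"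
    and v: "\<forall>S\<subseteq>L. card S = s + 1 \<and> pairwise_intersecting S \<longrightarrow>
               (\<exists>x. \<forall>l\<in>S. x \<in> l) \<or> is_fan L (s+1) S"
  shows "\<forall>X\<subseteq>L. (\<Sum>p\<in>rich_points P b X. real (card (lines_through X p)))
           > real a * ln (real q) * real (card X) / 2
             - 2 * real a * real b * real q ^ 2 * ln (real q)"
proof (intro allI impI)
  fix X assume XL: "X \<subseteq> L"
  have "q \<ge> 2" using q primepow_gt_Suc_0 by fastforce
  hence bound_pos: "2 * real a * real q ^ 2 * ln (real q) > 0" using a by simp
  hence "real (card P) > 0" using ii(1) by (simp add: mult_ac)
  hence "finite P" by (simp add: card_ge_0_finite)
  moreover have "finite X"
    using i \<open>q \<ge> 2\<close> by (intro finite_subset[OF XL] card_ge_0_finite) simp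
  moreover have "\<forall>l\<in>X. l \<subseteq> P"
    using pls XL by (auto simp: partial_linear_space_def)
  ultimately have incidences: "(\<Sum>l\<in>X. real (card l))
      \<le> (\<Sum>p\<in>rich_points P b X. real (card (lines_through X p))) + real (b - 1) * real (card P)"
    by (rule sum_card_le_rich_incidences)
  have "(\<Sum>l\<in>X. real a * ln (real q) / 2) \<le> (\<Sum>l\<in>X. real (card l))"
    using iii XL by (intro sum_mono) auto
  moreover have "real (b - 1) * real (card P) \<le> (real b - 1) * (2 * real a * real q ^ 2 * ln (real q))"
    using ii(2) b by (simp add: of_nat_diff mult_left_mono)
  ultimately show "(\<Sum>p\<in>rich_points P b X. real (card (lines_through X p)))
      > real a * ln (real q) * real (card X) / 2 - 2 * real a * real b * real q ^ 2 * ln (real q)"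
    using incidences bound_pos by (simp add: algebra_simps)
qed

end
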